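(* Let $f:(\mathbb R^2,q)\to(\mathbb R^3,p)$ be a smooth map germ with a corank 1 singularity at $q$, with curvature parabola $\Delta_p$, axial vector $v_a$, adapted frame $\{v_a,\nu_2\}$ and axial normal curvature function $K_{v_a}(y)=\langle\eta(y),v_a\rangle$, and suppose $\kappa_a(p)$ is defined. Then $\kappa_a(p)=0$ if and only if either $\Delta_p$ is a point, or $\eta(y_0)$ is parallel to $\nu_2$, where $y_0$ is a critical point of $K_{v_a}$.
   Context: Let $f:(\mathbb R^2,q)\to(\mathbb R^3,p)$ be a smooth germ with $\operatorname{rank} df_q=1$; $M$ is its image. $T_pM=\operatorname{im} df_q$ and $N_pM$ is its orthogonal complement (normal plane), with a fixed orientation. The first fundamental form is $I(X,Y)=\langle df_q X,df_qY\rangle$ on $T_q\mathbb R^2$. The second fundamental form $II:T_q\mathbb R^2\times T_q\mathbb R^2\to N_pM$ is the symmetric bilinear map with $II(\partial_u,\partial_u)=f_{uu}(q)^\perp$, $II(\partial_u,\partial_v)=f_{uv}(q)^\perp$, $II(\partial_v,\partial_v)=f_{vv}(q)^\perp$ ($\perp$ = orthogonal projection onto $N_pM$). With $C_q=\{X: I(X,X)=1\}$, the curvature parabola is $\Delta_p=\{II(X,X):X\in C_q\}$. Choosing coordinates with $f_v(q)=0$, $|f_u(q)|=1$, $C_q=\{\pm(\partial_u+y\partial_v)\}$ and $\Delta_p$ is parametrized by $\eta(y)=II(\partial_u+y\partial_v,\partial_u+y\partial_v)$, $y\in\mathbb R$; $\Delta_p$ is a non-degenerate parabola, a half-line, a line,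 or a point. If $\Delta_p$ is a line or half-line, set $\eta(y_\infty)=\eta'(y)/|\eta'(y)|$ for any $y>0$ with $\eta'(y)\neq0$. Axial vector $v_a\in N_pM$: if $\Delta_p$ is a non-degenerate parabola, let $v_d$ be the unit vector in the direction of its directrix and $v_a$ the unit vector with $\{v_a,v_d\}$ a positively oriented orthonormal frame (so $v_a$ points along the axis of symmetry towards the interior of the parabola); if $\Delta_p$ is a line or half-line, $v_a=\eta(y_\infty)$; if $\Delta_p$ is a point other than the origin, $v_a$ is such that $\{v_a,\eta/|\eta|\}$ is a positively oriented orthonormal frame; if $\Delta_p$ is the origin, $v_a$ is any unit vector. The adapted frame is $\{v_a,\nu_2\}$, the positively oriented orthonormal frame of $N_pM$ containing $v_a$. The axial curvature is $\kappa_a(p)=\min\{\langle\eta(y),v_a\rangle: y\in\mathbb R\}$, when this minimum exists (it does not when $\Delta_p$ is a line). *)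

theory Defs
  imports "HOL-Analysis.Analysis"
begin

fun Ck :: "nat \<Rightarrow> ('a::real_normed_vector \<Rightarrow> 'b::real_normed_vector) \<Rightarrow> 'a set \<Rightarrow> bool" where
  "Ck 0 f U = continuous_on U f"
| "Ck (Suc k) f U = (f differentiable_on U \<and> (\<forall>h. Ck k (\<lambda>x. frechet_derivative f (at x) h) U))"

definition smooth_on :: "'a::real_normed_vector set \<Rightarrow> ('a \<Rightarrow> 'b::real_normed_vector) \<Rightarrow> bool" where
  "smooth_on U f = (\<forall>k. Ck k f U)"

definition smooth_germ :: "(real \<times> real \<Rightarrow> real^3) \<Rightarrow> real \<times> real \<Rightarrow> bool" where
  "smooth_germ f q = (\<exists>U. open U \<and> q \<in> U \<and> smooth_on U f)"

definition dfq :: "(real \<times> real \<Rightarrow> real^3) \<Rightarrow> real \<times> real \<Rightarrow> real \<times> real \<Rightarrow> real^3" where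
  "dfq f q = frechet_derivative f (at q)"

definition rank_df :: "(real \<times> real \<Rightarrow> real^3) \<Rightarrow> real \<times> real \<Rightarrow> nat" where
  "rank_df f q = dim (range (dfq f q))"

definition D2f :: "(real \<times> real \<Rightarrow> real^3) \<Rightarrow> real \<times> real \<Rightarrow> real \<times> real \<Rightarrow> real \<times> real \<Rightarrow> real^3" where
  "D2f f q X Y = frechet_derivative (\<lambda>x. frechet_derivative f (at x) Y) (at q) X"

definition TpM :: "(real \<times> real \<Rightarrow> real^3) \<Rightarrow> real \<times> real \<Rightarrow> (real^3) set" where
  "TpM f q = range (dfq f q)"

definition NpM :: "(real \<times> real \<Rightarrow> real^3) \<Rightarrow> real \<times> real \<Rightarrow> (real^3) set" where
  "NpM f q = {w. \<forall>t \<in> TpM f q. w \<bullet> t = 0}"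

definition nproj :: "(real \<times> real \<Rightarrow> real^3) \<Rightarrow> real \<times> real \<Rightarrow> real^3 \<Rightarrow> real^3" where
  "nproj f q w = (THE n. n \<in> NpM f q \<and> w - n \<in> TpM f q)"

definition FFI :: "(real \<times> real \<Rightarrow> real^3) \<Rightarrow> real \<times> real \<Rightarrow> real \<times> real \<Rightarrow> real \<times> real \<Rightarrow> real" where
  "FFI f q X Y = dfq f q X \<bullet> dfq f q Y"

definition FFII :: "(real \<times> real \<Rightarrow> real^3) \<Rightarrow> real \<times> real \<Rightarrow> real \<times> real \<Rightarrow> real \<times> real \<Rightarrow> real^3" where
  "FFII f q X Y = nproj f q (D2f f q X Y)"

text \<open>Curvature parabola Delta_p and its parametrization eta (in the adapted coordinates).\<close>
definition curvature_parabola :: "(real \<times> real \<Rightarrow> real^3) \<Rightarrow> real \<times> real \<Rightarrow> (real^3) set" where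
  "curvature_parabola f q = {FFII f q X X | X. FFI f q X X = 1}"

definition eta :: "(real \<times> real \<Rightarrow> real^3) \<Rightarrow> real \<times> real \<Rightarrow> real \<Rightarrow> real^3" where
  "eta f q y = FFII f q (1, y) (1, y)"

definition is_point_set :: "(real^3) set \<Rightarrow> bool" where
  "is_point_set S = (\<exists>P. S = {P})"

definition is_line_set :: "(real^3) set \<Rightarrow> bool" where
  "is_line_set S = (\<exists>P d. d \<noteq> 0 \<and> S = {P + t *\<^sub>R d | t. True})"

definition is_halfline_set :: "(real^3) set \<Rightarrow> bool" where
  "is_halfline_set S = (\<exists>P d. d \<noteq> 0 \<and> S = {P + t *\<^sub>R d | t. t \<ge> 0})"

text \<open>S is a non-degenerate parabola whose axis of symmetry has unit direction e pointing
  towards the interior (opening direction).\<close>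
definition nd_parabola_with_axis :: "(real^3) set \<Rightarrow> real^3 \<Rightarrow> bool" where
  "nd_parabola_with_axis S e = (\<exists>V d k. norm e = 1 \<and> norm d = 1 \<and> d \<bullet> e = 0 \<and> k > 0 \<and>
      S = {V + t *\<^sub>R d + (k * t\<^sup>2) *\<^sub>R e | t. True})"

definition is_nd_parabola :: "(real^3) set \<Rightarrow> bool" where
  "is_nd_parabola S = (\<exists>e. nd_parabola_with_axis S e)"

text \<open>Orientation of N_pM fixed by a positively oriented orthonormal basis (e1,e2);
  (w1,w2) is positively oriented iff its determinant w.r.t. (e1,e2) is positive.\<close>
definition oriented_normal_basis :: "(real \<times> real \<Rightarrow> real^3) \<Rightarrow> real \<times> real \<Rightarrow> real^3 \<Rightarrow> real^3 \<Rightarrow> bool" where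
  "oriented_normal_basis f q e1 e2 = (e1 \<in> NpM f q \<and> e2 \<in> NpM f q \<and> norm e1 = 1 \<and> norm e2 = 1 \<and> e1 \<bullet> e2 = 0)"

definition pos_oriented :: "real^3 \<Rightarrow> real^3 \<Rightarrow> real^3 \<Rightarrow> real^3 \<Rightarrow> bool" where
  "pos_oriented e1 e2 w1 w2 = ((w1 \<bullet> e1) * (w2 \<bullet> e2) - (w1 \<bullet> e2) * (w2 \<bullet> e1) > 0)"

definition pos_orthonormal_frame :: "(real \<times> real \<Rightarrow> real^3) \<Rightarrow> real \<times> real \<Rightarrow> real^3 \<Rightarrow> real^3 \<Rightarrow> real^3 \<Rightarrow> real^3 \<Rightarrow> bool" where
  "pos_orthonormal_frame f q e1 e2 w1 w2 = (w1 \<in> NpM f q \<and> w2 \<in> NpM f q \<and> norm w1 = 1 \<and> norm w2 = 1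
      \<and> w1 \<bullet> w2 = 0 \<and> pos_oriented e1 e2 w1 w2)"

text \<open>Axial vector v_a (a relation, since for Delta_p = origin it is any unit vector).
  Line / half-line case: eta(y_infinity) = eta'(y)/|eta'(y)| for (all sufficiently large) y.\<close>
definition is_axial_vector :: "(real \<times> real \<Rightarrow> real^3) \<Rightarrow> real \<times> real \<Rightarrow> real^3 \<Rightarrow> real^3 \<Rightarrow> real^3 \<Rightarrow> bool" where
  "is_axial_vector f q e1 e2 va = (va \<in> NpM f q \<and> norm va = 1 \<and>
     (let S = curvature_parabola f q; deta = (\<lambda>y. vector_derivative (eta f q) (at y)) in
       (is_nd_parabola S \<and> nd_parabola_with_axis S va)
     \<or> ((is_line_set S \<or> is_halfline_set S) \<and>
          (\<forall>\<^sub>F y in at_top. deta y \<noteq> 0 \<and> va = (1 / norm (deta y)) *\<^sub>R deta y))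
     \<or> (\<exists>P. S = {P} \<and> P \<noteq> 0 \<and> pos_orthonormal_frame f q e1 e2 va ((1 / norm P) *\<^sub>R P))
     \<or> S = {0}))"

definition is_adapted_frame :: "(real \<times> real \<Rightarrow> real^3) \<Rightarrow> real \<times> real \<Rightarrow> real^3 \<Rightarrow> real^3 \<Rightarrow> real^3 \<Rightarrow> real^3 \<Rightarrow> bool" where
  "is_adapted_frame f q e1 e2 va nu2 = pos_orthonormal_frame f q e1 e2 va nu2"

definition axial_normal_curvature :: "(real \<times> real \<Rightarrow> real^3) \<Rightarrow> real \<times> real \<Rightarrow> real^3 \<Rightarrow> real \<Rightarrow> real" where
  "axial_normal_curvature f q va y = eta f q y \<bullet> va"

definition axial_curvature_defined :: "(real \<times> real \<Rightarrow> real^3) \<Rightarrow> real \<times> real \<Rightarrow> real^3 \<Rightarrow> bool" where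
  "axial_curvature_defined f q va =
     (\<exists>y0. \<forall>y. axial_normal_curvature f q va y0 \<le> axial_normal_curvature f q va y)"

definition axial_curvature :: "(real \<times> real \<Rightarrow> real^3) \<Rightarrow> real \<times> real \<Rightarrow> real^3 \<Rightarrow> real" where
  "axial_curvature f q va = Inf (range (axial_normal_curvature f q va))"

definition parallel :: "real^3 \<Rightarrow> real^3 \<Rightarrow> bool" where
  "parallel u w = (\<exists>t. u = t *\<^sub>R w)"

end

theory Submission
  imports Defs
begin

text \<open>In the adapted coordinates \<open>\<eta>(y)\<close> is a quadratic polynomial in \<open>y\<close> with values in the
  normal plane, so \<open>K(y) = \<langle>\<eta>(y), v\<^sub>a\<rangle>\<close> is a real quadratic polynomial. Since \<open>K\<close> attains its
  minimum, its leading coefficient is nonnegative and its critical points are exactly its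
  minimisers. Hence \<open>\<kappa>\<^sub>a(p) = 0\<close> iff \<open>\<eta>\<close> is orthogonal to \<open>v\<^sub>a\<close> at some critical point, i.e. parallel
  to \<open>\<nu>\<^sub>2\<close>, because \<open>{v\<^sub>a, \<nu>\<^sub>2}\<close> is an orthonormal basis of the normal plane. If \<open>\<Delta>\<^sub>p\<close> is a point
  \<open>P\<close>, the definition of the axial vector forces \<open>v\<^sub>a \<perp> P\<close>, so \<open>K\<close> vanishes identically.\<close>

lemma linear_prod_real_expand:
  fixes L :: "real \<times> real \<Rightarrow> 'a::real_vector"
  assumes "linear L"
  shows "L (u, v) = u *\<^sub>R L (1, 0) + v *\<^sub>R L (0, 1)"
proof -
  have "(u, v) = u *\<^sub>R (1, 0) + v *\<^sub>R ((0, 1) :: real \<times> real)"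
    by simp
  then show ?thesis
    by (metis linear_add[OF assms] linear_scale[OF assms])
qed

lemma smooth_germ_twice_differentiable:
  assumes "smooth_germ f q"
  obtains U where "open U" "q \<in> U" "f differentiable_on U"
    "\<And>h. (\<lambda>x. frechet_derivative f (at x) h) differentiable at q"
proof -
  obtain U where U: "open U" "q \<in> U" "Ck 2 f U"
    using assms unfolding smooth_germ_def smooth_on_def by blast
  then have "f differentiable_on U" "\<And>h. (\<lambda>x. frechet_derivative f (at x) h) differentiable_on U"
    by (auto simp: numeral_2_eq_2)
  with U show ?thesis
    using that differentiable_on_eq_differentiable_at by blast
qed

lemma smooth_germ_differentiable:
  assumes "smooth_germ f q"
  shows "f differentiable at q"
  by (metis smooth_germ_twice_differentiable[OF assms] differentiable_on_eq_differentiable_at)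

lemma dfq_expand:
  assumes "f differentiable at q"
  shows "dfq f q (u, v) = u *\<^sub>R dfq f q (1, 0) + v *\<^sub>R dfq f q (0, 1)"
  using linear_prod_real_expand[OF has_derivative_linear] assms
  unfolding dfq_def frechet_derivative_works by blast

lemma D2f_linear_left:
  assumes "(\<lambda>x. frechet_derivative f (at x) Y) differentiable at q"
  shows "linear (\<lambda>X. D2f f q X Y)"
  using assms unfolding D2f_def
  by (metis frechet_derivative_works has_derivative_linear)

lemma D2f_expand_right:
  assumes "open U" "q \<in> U" "f differentiable_on U"
    and "\<And>h. (\<lambda>x. frechet_derivative f (at x) h) differentiable at q"
  shows "D2f f q X (u, v) = u *\<^sub>R D2f f q X (1, 0) + v *\<^sub>R D2f f q X (0, 1)"
proof -
  define g where "g h = (\<lambda>x. frechet_derivative f (at x) h)" for h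
  define D where "D h = frechet_derivative (g h) (at q)" for h
  have D: "(g h has_derivative D h) (at q)" for h
    unfolding D_def g_def using assms(4) frechet_derivative_works by blast
  have "g (u, v) x = u *\<^sub>R g (1, 0) x + v *\<^sub>R g (0, 1) x" if "x \<in> U" for x
    using assms(1,3) that dfq_expand[of f x u v]
    by (simp add: g_def dfq_def differentiable_on_eq_differentiable_at)
  moreover have "((\<lambda>x. u *\<^sub>R g (1, 0) x + v *\<^sub>R g (0, 1) x)
      has_derivative (\<lambda>X. u *\<^sub>R D (1, 0) X + v *\<^sub>R D (0, 1) X)) (at q)"
    by (intro derivative_intros D)
  ultimately have "(g (u, v) has_derivative (\<lambda>X. u *\<^sub>R D (1, 0) X + v *\<^sub>R D (0, 1) X)) (at q)"
    using has_derivative_transform_within_open[OF _ assms(1,2)] by fastforce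
  then have "D (u, v) = (\<lambda>X. u *\<^sub>R D (1, 0) X + v *\<^sub>R D (0, 1) X)"
    unfolding D_def by (rule frechet_derivative_at[symmetric])
  moreover have "D2f f q X Y = D Y X" for X Y
    by (simp add: D2f_def D_def g_def)
  ultimately show ?thesis
    by simp
qed

lemma D2f_diagonal:
  assumes "smooth_germ f q"
  shows "D2f f q (1, y) (1, y) = D2f f q (1, 0) (1, 0)
    + y *\<^sub>R (D2f f q (1, 0) (0, 1) + D2f f q (0, 1) (1, 0)) + y\<^sup>2 *\<^sub>R D2f f q (0, 1) (0, 1)"
proof -
  obtain U where U: "open U" "q \<in> U" "f differentiable_on U"
    "\<And>h. (\<lambda>x. frechet_derivative f (at x) h) differentiable at q"
    using smooth_germ_twice_differentiable[OF assms] by blast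
  have "D2f f q (1, y) (1, y) = D2f f q (1, 0) (1, y) + y *\<^sub>R D2f f q (0, 1) (1, y)"
    using linear_prod_real_expand[OF D2f_linear_left[OF U(4)], of 1 y] by simp
  also have "\<dots> = D2f f q (1, 0) (1, 0) + y *\<^sub>R D2f f q (1, 0) (0, 1)
      + y *\<^sub>R (D2f f q (0, 1) (1, 0) + y *\<^sub>R D2f f q (0, 1) (0, 1))"
    using D2f_expand_right[OF U, of "(1, 0)" 1 y] D2f_expand_right[OF U, of "(0, 1)" 1 y]
    by simp
  finally show ?thesis
    by (simp add: algebra_simps power2_eq_square)
qed

lemma dfq_eq_fst_scaleR:
  assumes "f differentiable at q" "dfq f q (0, 1) = 0" "dfq f q (1, 0) = T"
  shows "dfq f q X = fst X *\<^sub>R T"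
  using dfq_expand[OF assms(1), of "fst X" "snd X"] assms(2,3) by simp

lemma
  assumes "f differentiable at q" "dfq f q (0, 1) = 0" "dfq f q (1, 0) = T"
  shows TpM_eq_line: "TpM f q = range (\<lambda>s. s *\<^sub>R T)"
    and NpM_iff_orthogonal: "w \<in> NpM f q \<longleftrightarrow> w \<bullet> T = 0"
proof -
  have "s *\<^sub>R T \<in> range (dfq f q)" for s
    using dfq_eq_fst_scaleR[OF assms, of "(s, 0)"] by (metis fst_conv rangeI)
  then show TpM: "TpM f q = range (\<lambda>s. s *\<^sub>R T)"
    unfolding TpM_def by (auto simp: dfq_eq_fst_scaleR[OF assms])
  show "w \<in> NpM f q \<longleftrightarrow> w \<bullet> T = 0"
    unfolding NpM_def TpM by auto
qed

lemma nproj_eq: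
  assumes "f differentiable at q" "dfq f q (0, 1) = 0" "dfq f q (1, 0) = T" "norm T = 1"
  shows "nproj f q w = w - (w \<bullet> T) *\<^sub>R T"
  unfolding nproj_def
proof (rule the_equality)
  have TT: "T \<bullet> T = 1"
    using assms(4) by (simp add: dot_square_norm)
  then show "w - (w \<bullet> T) *\<^sub>R T \<in> NpM f q \<and> w - (w - (w \<bullet> T) *\<^sub>R T) \<in> TpM f q"
    by (auto simp: NpM_iff_orthogonal[OF assms(1-3)] TpM_eq_line[OF assms(1-3)] inner_diff_left)
  fix n
  assume "n \<in> NpM f q \<and> w - n \<in> TpM f q"
  then obtain s where n: "n \<bullet> T = 0" "w - n = s *\<^sub>R T"
    by (auto simp: NpM_iff_orthogonal[OF assms(1-3)] TpM_eq_line[OF assms(1-3)])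
  then have "w \<bullet> T = s"
    using TT by (simp add: algebra_simps inner_diff_left)
  with n show "n = w - (w \<bullet> T) *\<^sub>R T"
    by (simp add: algebra_simps)
qed

lemma eta_quadratic:
  assumes "smooth_germ f q" "dfq f q (0, 1) = 0" "dfq f q (1, 0) = T" "norm T = 1"
  shows "\<exists>a b c. \<forall>y. eta f q y = a + y *\<^sub>R b + y\<^sup>2 *\<^sub>R c"
proof -
  let ?P = "nproj f q"
  have P: "?P w = w - (w \<bullet> T) *\<^sub>R T" for w
    using nproj_eq[OF smooth_germ_differentiable[OF assms(1)] assms(2-4)] .
  have lin: "linear ?P"
    by (rule linearI) (simp_all add: P algebra_simps inner_add_left)
  have "eta f q y = ?P (D2f f q (1, 0) (1, 0))
      + y *\<^sub>R ?P (D2f f q (1, 0) (0, 1) + D2f f q (0, 1) (1, 0)) + y\<^sup>2 *\<^sub>R ?P (D2f f q (0, 1) (0, 1))"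
    for y
    unfolding eta_def FFII_def D2f_diagonal[OF assms(1), of y]
    by (simp only: linear_add[OF lin] linear_scale[OF lin])
  then show ?thesis
    by blast
qed

lemma eta_in_NpM:
  assumes "f differentiable at q" "dfq f q (0, 1) = 0" "dfq f q (1, 0) = T" "norm T = 1"
  shows "eta f q y \<in> NpM f q"
  using assms(4)
  by (simp add: eta_def FFII_def nproj_eq[OF assms] NpM_iff_orthogonal[OF assms(1-3)]
      inner_diff_left dot_square_norm)

lemma eta_in_curvature_parabola:
  assumes "f differentiable at q" "dfq f q (0, 1) = 0" "dfq f q (1, 0) = T" "norm T = 1"
  shows "eta f q y \<in> curvature_parabola f q"
proof -
  have "FFI f q (1, y) (1, y) = 1"
    using assms(4) by (simp add: FFI_def dfq_eq_fst_scaleR[OF assms(1-3)] dot_square_norm)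
  then show ?thesis
    unfolding curvature_parabola_def eta_def by blast
qed

lemma axial_normal_curvature_quadratic:
  assumes "smooth_germ f q" "dfq f q (0, 1) = 0" "dfq f q (1, 0) = T" "norm T = 1"
  shows "\<exists>A B C. \<forall>y. axial_normal_curvature f q va y = A + y * B + y\<^sup>2 * C"
proof -
  obtain a b c where "\<And>y. eta f q y = a + y *\<^sub>R b + y\<^sup>2 *\<^sub>R c"
    using eta_quadratic[OF assms] by blast
  then have "axial_normal_curvature f q va y = a \<bullet> va + y * (b \<bullet> va) + y\<^sup>2 * (c \<bullet> va)" for y
    by (simp add: axial_normal_curvature_def inner_add_left)
  then show ?thesis
    by blast
qed

lemma quadratic_critical_iff_minimum:
  fixes K :: "real \<Rightarrow> real"
  assumes K: "\<And>y. K y = A + y * B + y\<^sup>2 * C" and min: "\<And>y. K y1 \<le> K y"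
  shows "(K has_real_derivative 0) (at y0) \<longleftrightarrow> (\<forall>y. K y0 \<le> K y)"
proof -
  have "K = (\<lambda>y. A + y * B + y\<^sup>2 * C)"
    using K by blast
  then have K': "(K has_real_derivative B + 2 * C * y) (at y)" for y
    by (auto intro!: derivative_eq_intros)
  have crit_iff: "(K has_real_derivative 0) (at y) \<longleftrightarrow> B + 2 * C * y = 0" for y
    using K' DERIV_unique by metis
  have "B + 2 * C * y1 = 0"
    using DERIV_local_min[OF K'[of y1], of 1] min by simp
  then have "C \<ge> 0"
    using min[of "y1 + 1"] by (simp add: K algebra_simps power2_eq_square)
  show ?thesis
  proof
    assume "(K has_real_derivative 0) (at y0)"
    then have "K y - K y0 = C * (y - y0)\<^sup>2" for y
      by (simp add: crit_iff K algebra_simps power2_eq_square eq_neg_iff_add_eq_0[symmetric])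
    with \<open>C \<ge> 0\<close> show "\<forall>y. K y0 \<le> K y"
      by (metis diff_ge_0_iff_ge zero_le_mult_iff zero_le_power2)
  next
    assume "\<forall>y. K y0 \<le> K y"
    then show "(K has_real_derivative 0) (at y0)"
      using DERIV_local_min[OF K'[of y0], of 1] crit_iff by simp
  qed
qed

lemma axial_curvature_eq_minimum:
  assumes "\<And>y. axial_normal_curvature f q va y0 \<le> axial_normal_curvature f q va y"
  shows "axial_curvature f q va = axial_normal_curvature f q va y0"
  unfolding axial_curvature_def using assms by (intro cInf_eq_minimum) auto

lemma orthonormal_triple_complement_parallel:
  fixes a b c w :: "'a::euclidean_space"
  assumes "DIM('a) = 3"
    and "norm a = 1" "norm b = 1" "norm c = 1" "a \<bullet> b = 0" "a \<bullet> c = 0" "b \<bullet> c = 0"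
    and "w \<bullet> a = 0" "w \<bullet> c = 0"
  shows "w = (w \<bullet> b) *\<^sub>R b"
proof -
  define r where "r = w - (w \<bullet> b) *\<^sub>R b"
  have distinct: "a \<noteq> b" "a \<noteq> c" "b \<noteq> c"
    using assms(2-7) by (metis inner_eq_zero_iff norm_zero zero_neq_one)+
  have "independent {a, b, c}"
    using assms(2-7) by (intro pairwise_orthogonal_independent)
      (auto simp: pairwise_def orthogonal_def inner_commute)
  then have "UNIV \<subseteq> span {a, b, c}"
    using distinct assms(1) by (intro card_ge_dim_independent) auto
  moreover have "r \<bullet> a = 0" "r \<bullet> b = 0" "r \<bullet> c = 0"
    using assms by (auto simp: r_def inner_diff_left inner_commute[of b a] inner_commute[of b c] dot_square_norm)
  ultimately have "orthogonal r r"
    by (intro orthogonal_to_span[of r "{a, b, c}"]) (auto simp: orthogonal_def)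
  then show ?thesis
    by (simp add: r_def orthogonal_def)
qed

lemma NpM_orthogonal_frame_parallel:
  assumes "f differentiable at q" "dfq f q (0, 1) = 0" "dfq f q (1, 0) = T" "norm T = 1"
    and "pos_orthonormal_frame f q e1 e2 va nu2"
    and "w \<in> NpM f q" "w \<bullet> va = 0"
  shows "parallel w nu2"
proof -
  have "va \<bullet> T = 0" "nu2 \<bullet> T = 0" "norm va = 1" "norm nu2 = 1" "va \<bullet> nu2 = 0" "w \<bullet> T = 0"
    using assms(5,6) by (auto simp: pos_orthonormal_frame_def NpM_iff_orthogonal[OF assms(1-3)])
  then have "w = (w \<bullet> nu2) *\<^sub>R nu2"
    using assms(4,7) by (intro orthonormal_triple_complement_parallel[of va nu2 T]) auto
  then show ?thesis
    unfolding parallel_def by blast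
qed

lemma singleton_not_line_set: "\<not> is_line_set {P}"
proof
  assume "is_line_set {P}"
  then obtain P0 d where d: "d \<noteq> 0" and S: "{P} = {P0 + t *\<^sub>R d | t. True}"
    unfolding is_line_set_def by blast
  have "P0 + 0 *\<^sub>R d \<in> {P}" "P0 + 1 *\<^sub>R d \<in> {P}"
    unfolding S by blast+
  with d show False
    by simp
qed

lemma singleton_not_halfline_set: "\<not> is_halfline_set {P}"
proof
  assume "is_halfline_set {P}"
  then obtain P0 d where d: "d \<noteq> 0" and S: "{P} = {P0 + t *\<^sub>R d | t. t \<ge> 0}"
    unfolding is_halfline_set_def by blast
  have "P0 + 0 *\<^sub>R d \<in> {P}" "P0 + 1 *\<^sub>R d \<in> {P}"
    unfolding S by (blast intro: order_refl zero_le_one)+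
  with d show False
    by simp
qed

lemma singleton_not_nd_parabola: "\<not> is_nd_parabola {P}"
proof
  assume "is_nd_parabola {P}"
  then obtain V d e k where d: "norm d = 1" "d \<bullet> e = 0"
    and S: "{P} = {V + t *\<^sub>R d + (k * t\<^sup>2) *\<^sub>R e | t. True}"
    unfolding is_nd_parabola_def nd_parabola_with_axis_def by blast
  have "V + 0 *\<^sub>R d + (k * 0\<^sup>2) *\<^sub>R e \<in> {P}" "V + 1 *\<^sub>R d + (k * 1\<^sup>2) *\<^sub>R e \<in> {P}"
    unfolding S by blast+
  then have "(d + k *\<^sub>R e) \<bullet> d = 0"
    by simp
  with d show False
    by (simp add: inner_add_left inner_commute[of e d] dot_square_norm)
qed

lemma axial_vector_orthogonal_point:
  assumes "is_axial_vector f q e1 e2 va" "curvature_parabola f q = {P}"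
  shows "P \<bullet> va = 0"
  using assms singleton_not_nd_parabola singleton_not_line_set singleton_not_halfline_set
  by (auto simp: is_axial_vector_def pos_orthonormal_frame_def inner_commute)

lemma axial_normal_curvature_eq_0_if_point:
  assumes "f differentiable at q" "dfq f q (0, 1) = 0" "dfq f q (1, 0) = T" "norm T = 1"
    and "is_axial_vector f q e1 e2 va" "curvature_parabola f q = {P}"
  shows "axial_normal_curvature f q va y = 0"
  using eta_in_curvature_parabola[OF assms(1-4), of y] axial_vector_orthogonal_point[OF assms(5,6)]
  by (simp add: assms(6) axial_normal_curvature_def)

theorem mainTheorem1:
  fixes f :: "real \<times> real \<Rightarrow> real^3" and q :: "real \<times> real"
    and e1 e2 va nu2 :: "real^3"
  assumes "smooth_germ f q"
    and "rank_df f q = 1"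
    and "dfq f q (0, 1) = 0" and "norm (dfq f q (1, 0)) = 1"
    and "oriented_normal_basis f q e1 e2"
    and "is_axial_vector f q e1 e2 va"
    and "is_adapted_frame f q e1 e2 va nu2"
    and "axial_curvature_defined f q va"
  shows "axial_curvature f q va = 0 \<longleftrightarrow>
           is_point_set (curvature_parabola f q)
         \<or> (\<exists>y0. (axial_normal_curvature f q va has_real_derivative 0) (at y0)
                 \<and> parallel (eta f q y0) nu2)"
proof -
  let ?K = "axial_normal_curvature f q va"
  define T where "T = dfq f q (1, 0)"
  have normalised: "f differentiable at q" "dfq f q (0, 1) = 0" "dfq f q (1, 0) = T" "norm T = 1"
    using smooth_germ_differentiable assms(1,3,4) by (auto simp: T_def)
  obtain A B C where K: "\<And>y. ?K y = A + y * B + y\<^sup>2 * C"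
    using axial_normal_curvature_quadratic[OF assms(1) normalised(2-4)] by blast
  obtain y1 where y1: "\<And>y. ?K y1 \<le> ?K y"
    using assms(8) unfolding axial_curvature_defined_def by blast
  have frame: "pos_orthonormal_frame f q e1 e2 va nu2"
    using assms(7) unfolding is_adapted_frame_def .
  show ?thesis
  proof
    assume "axial_curvature f q va = 0"
    then have "eta f q y1 \<bullet> va = 0"
      by (simp add: axial_curvature_eq_minimum[OF y1] axial_normal_curvature_def)
    then have "parallel (eta f q y1) nu2"
      using NpM_orthogonal_frame_parallel[OF normalised frame eta_in_NpM[OF normalised]] by blast
    moreover have "(?K has_real_derivative 0) (at y1)"
      using quadratic_critical_iff_minimum[OF K y1] y1 by blast
    ultimately show "is_point_set (curvature_parabola f q)
         \<or> (\<exists>y0. (?K has_real_derivative 0) (at y0) \<and> parallel (eta f q y0) nu2)"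
      by blast
  next
    assume "is_point_set (curvature_parabola f q)
         \<or> (\<exists>y0. (?K has_real_derivative 0) (at y0) \<and> parallel (eta f q y0) nu2)"
    then obtain y0 where "\<And>y. ?K y0 \<le> ?K y" "?K y0 = 0"
    proof
      assume "is_point_set (curvature_parabola f q)"
      then show thesis
        using that axial_normal_curvature_eq_0_if_point[OF normalised assms(6)]
        unfolding is_point_set_def by (metis order_refl)
    next
      assume "\<exists>y0. (?K has_real_derivative 0) (at y0) \<and> parallel (eta f q y0) nu2"
      then obtain y0 t where crit: "(?K has_real_derivative 0) (at y0)"
        and "eta f q y0 = t *\<^sub>R nu2"
        unfolding parallel_def by blast
      moreover have "va \<bullet> nu2 = 0"
        using frame unfolding pos_orthonormal_frame_def by simp
      ultimately have "?K y0 = 0"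
        by (simp add: axial_normal_curvature_def inner_commute)
      moreover have "\<And>y. ?K y0 \<le> ?K y"
        using crit quadratic_critical_iff_minimum[OF K y1] by blast
      ultimately show thesis
        using that by blast
    qed
    then show "axial_curvature f q va = 0"
      by (metis axial_curvature_eq_minimum)
  qed
qed

end
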